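(* Let $n\ge 1$. For every integer $N$ with $2n-1\leq N\leq n(n+1)/2$, there exists an exact phase-retrievable frame $\{f_i\}_{i=1}^N$ of length $N$ for $\mathbb{R}^n$.
   Context: All spaces are real. A finite sequence $\mathcal{F}=\{f_i\}_{i=1}^N$ in a finite-dimensional real inner product space $V$ is a frame for $V$ if it spans $V$. It is phase-retrievable (a PR frame) if whenever $x,y\in V$ satisfy $|\langle x,f_i\rangle|=|\langle y,f_i\rangle|$ for all $i$, then $x=\pm y$. Let $\mathrm{Sym}(V)$ be the space of self-adjoint operators on $V$, and $\mathcal{S}_2$ the set of those of rank at most $2$. For $\Lambda\subseteq\{1,\dots,N\}$ let $\mathcal{F}_\Lambda=\{f_i\}_{i\in\Lambda}$ and let $\Theta_{L(\mathcal{F}_\Lambda)}:\mathrm{Sym}(V)\to\mathbb{R}^{\Lambda}$, $A\mapsto(\langle Af_i,f_i\rangle)_{i\in\Lambda}$ (the analysis operator of $\{f_i\otimes f_i\}_{i\in\Lambda}$ for the Hilbert–Schmidt inner product). $\mathcal{F}$ has the exact PR-redundancy property if for every proper subset $\Lambda\subsetneq\{1,\dots,N\}$ one has $\ker(\Theta_{L(\mathcal{F}_\Lambda)})\cap\mathcal{S}_2\neq\ker(\Theta_{L(\mathcal{F})})\cap\mathcal{S}_2$. An exact phase-retrievable frame is a phase-retrievable frame with the exact PR-redundancy property. *)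

theory Defs
  imports "HOL-Analysis.Analysis"
begin

text \<open>A finite sequence f_0,...,f_{N-1} in real^'n (indices shifted to 0..N-1).
  Self-adjoint operators on real^'n (standard inner product) are symmetric matrices.\<close>

definition is_frame :: "nat \<Rightarrow> (nat \<Rightarrow> real^'n) \<Rightarrow> bool" where
  "is_frame N f \<longleftrightarrow> span (f ` {0..<N}) = UNIV"

definition phase_retrievable :: "nat \<Rightarrow> (nat \<Rightarrow> real^'n) \<Rightarrow> bool" where
  "phase_retrievable N f \<longleftrightarrow>
     (\<forall>x y. (\<forall>i<N. \<bar>x \<bullet> f i\<bar> = \<bar>y \<bullet> f i\<bar>) \<longrightarrow> x = y \<or> x = - y)"

definition PR_frame :: "nat \<Rightarrow> (nat \<Rightarrow> real^'n) \<Rightarrow> bool" where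
  "PR_frame N f \<longleftrightarrow> is_frame N f \<and> phase_retrievable N f"

definition Sym_ops :: "(real^'n^'n) set" where
  "Sym_ops = {A. transpose A = A}"

definition S2 :: "(real^'n^'n) set" where
  "S2 = {A \<in> Sym_ops. rank A \<le> 2}"

text \<open>Kernel of the analysis operator of {f_i \<otimes> f_i}_{i \<in> \<Lambda>} on Sym(V).\<close>
definition ker_Theta :: "(nat \<Rightarrow> real^'n) \<Rightarrow> nat set \<Rightarrow> (real^'n^'n) set" where
  "ker_Theta f \<Lambda> = {A \<in> Sym_ops. \<forall>i\<in>\<Lambda>. (A *v f i) \<bullet> f i = 0}"

definition exact_PR_redundancy :: "nat \<Rightarrow> (nat \<Rightarrow> real^'n) \<Rightarrow> bool" where
  "exact_PR_redundancy N f \<longleftrightarrow>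
     (\<forall>\<Lambda>. \<Lambda> \<subset> {0..<N} \<longrightarrow> ker_Theta f \<Lambda> \<inter> S2 \<noteq> ker_Theta f {0..<N} \<inter> S2)"

definition exact_PR_frame :: "nat \<Rightarrow> (nat \<Rightarrow> real^'n) \<Rightarrow> bool" where
  "exact_PR_frame N f \<longleftrightarrow> PR_frame N f \<and> exact_PR_redundancy N f"

end

theory Submission
  imports Defs "Jordan_Normal_Form.Determinant"
begin

(*
  Take the standard basis of R^n, with coordinates indexed by 0..n-1 through a bijection h,
  together with m = N - n rows r_j whose entry at coordinate c is 2^(c (n+1)^j) if c lies in
  a prescribed support S_j and 0 otherwise. The exponents are distinct base-(n+1)
  expansions, so the Leibniz expansion of a square submatrix of rows whose support pattern
  contains the diagonal is a signed sum of distinct powers of 2 and does not vanish. With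
  Hall's marriage theorem this makes the rows behave like generic vectors with the given
  zero pattern.

  The supports form an admissible pattern: each coordinate lies in at most n - 1 supports,
  and for disjoint nonempty sets Q, P of coordinates at least |Q| + |P| - 1 supports meet
  both. The second condition gives the complement property (no nonzero a, b have
  <a, f_i> <b, f_i> = 0 for all i), hence phase retrieval. The first gives, for each frame
  vector f_i, vectors u, v for which <u, f_k> <v, f_k> is nonzero exactly at k = i; the
  rank-two operator u v^T + v u^T then lies in the kernel for every index set missing i,
  but not for the whole frame.

  Admissible patterns with n + m = N are built explicitly for 2n - 1 <= N <= 3n - 3, and
  adjoining a coordinate n with the n rows {i, n} passes from n to n + 1, which covers the
  remaining lengths up to n (n + 1) / 2.
*)

section \<open>Signed digit expansions and nonsingular power-of-two patterns\<close>

lemma abs_sum_signed_digits_less_power: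
  fixes c :: "nat \<Rightarrow> int" and B :: int
  assumes "0 < B" and "finite T" and "\<forall>t\<in>T. t < M" and "\<forall>t\<in>T. \<bar>c t\<bar> < B"
  shows "\<bar>\<Sum>t\<in>T. c t * B ^ t\<bar> < B ^ M"
proof -
  have "\<bar>\<Sum>t\<in>T. c t * B ^ t\<bar> \<le> (\<Sum>t\<in>T. (B - 1) * B ^ t)"
    using assms(4) by (intro order.trans[OF sum_abs] sum_mono) (auto simp: abs_mult intro: mult_right_mono)
  also have "\<dots> \<le> (\<Sum>t<M. (B - 1) * B ^ t)"
    using assms(1-3) by (auto intro!: sum_mono2)
  also have "\<dots> = B ^ M - 1"
    by (simp add: power_diff_1_eq sum_distrib_left)
  finally show ?thesis by simp
qed

lemma sum_signed_digits_eq_0D: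
  fixes c :: "nat \<Rightarrow> int" and B :: int
  assumes "finite T" and "\<forall>t\<in>T. \<bar>c t\<bar> < B" and "(\<Sum>t\<in>T. c t * B ^ t) = 0"
  shows "\<forall>t\<in>T. c t = 0"
proof (rule ccontr)
  define T' where "T' = {t\<in>T. c t \<noteq> 0}"
  assume "\<not> (\<forall>t\<in>T. c t = 0)"
  then have "T' \<noteq> {}" by (auto simp: T'_def)
  moreover have "finite T'" using assms(1) by (simp add: T'_def)
  ultimately have M: "Max T' \<in> T'" "\<forall>t\<in>T' - {Max T'}. t < Max T'"
    using Max_ge[of T'] by (auto simp: order.order_iff_strict)
  have "(\<Sum>t\<in>T'. c t * B ^ t) = 0"
    using assms(1,3) by (simp add: T'_def sum.mono_neutral_right[of T T'])
  then have "c (Max T') * B ^ Max T' = - (\<Sum>t\<in>T' - {Max T'}. c t * B ^ t)"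
    using M(1) \<open>finite T'\<close> by (simp add: sum.remove)
  moreover have "\<bar>\<Sum>t\<in>T' - {Max T'}. c t * B ^ t\<bar> < B ^ Max T'"
    using M assms(2) \<open>finite T'\<close> by (intro abs_sum_signed_digits_less_power) (auto simp: T'_def)
  moreover have "B ^ Max T' \<le> \<bar>c (Max T') * B ^ Max T'\<bar>"
    using M(1) assms(2) by (auto simp: T'_def abs_mult intro!: mult_right_mono[of 1, simplified])
  ultimately show False by simp
qed

lemma sum_signed_digits_inj_eq_0D:
  fixes s :: "'a \<Rightarrow> int" and B :: int
  assumes "finite V" and "inj_on E V" and "\<forall>p\<in>V. \<bar>s p\<bar> < B"
    and "(\<Sum>p\<in>V. s p * B ^ E p) = 0"
  shows "\<forall>p\<in>V. s p = 0"
proof -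
  have "(\<Sum>t\<in>E ` V. s (inv_into V E t) * B ^ t) = 0"
    using assms(2,4) by (simp add: sum.reindex)
  then have "\<forall>t\<in>E ` V. s (inv_into V E t) = 0"
    using assms(1-3) by (intro sum_signed_digits_eq_0D) auto
  then show ?thesis using assms(2) by auto
qed

lemma digit_expansion_inj:
  fixes d d' :: "'a \<Rightarrow> nat"
  assumes "finite I" and "inj_on J I" and "\<forall>i\<in>I. d i < B \<and> d' i < B"
    and "(\<Sum>i\<in>I. d i * B ^ J i) = (\<Sum>i\<in>I. d' i * B ^ J i)"
  shows "\<forall>i\<in>I. d i = d' i"
proof -
  have "\<forall>i\<in>I. \<bar>int (d i) - int (d' i)\<bar> < int B"
  proof
    fix i assume "i \<in> I"
    with assms(3) have "d i < B" "d' i < B" by auto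
    then show "\<bar>int (d i) - int (d' i)\<bar> < int B" by linarith
  qed
  moreover have "(\<Sum>i\<in>I. (int (d i) - int (d' i)) * int B ^ J i) = 0"
    using assms(4) by (simp add: sum_subtractf left_diff_distrib flip: of_nat_mult of_nat_power of_nat_sum)
  ultimately have "\<forall>i\<in>I. int (d i) - int (d' i) = 0"
    by (rule sum_signed_digits_inj_eq_0D[OF assms(1,2)])
  then show ?thesis by simp
qed

lemma det_pow2_pattern_neq_0:
  fixes d J :: "nat \<Rightarrow> nat" and R :: "nat \<Rightarrow> nat \<Rightarrow> bool"
  assumes inj_J: "inj_on J {..<q}" and inj_d: "inj_on d {..<q}" and d_less: "\<forall>i<q. d i < B"
    and R_diag: "\<forall>i<q. R i i"
  shows "det (mat q q (\<lambda>(l, k). if R l k then (2::real) ^ (d k * B ^ J l) else 0)) \<noteq> 0"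
proof -
  define A where "A = mat q q (\<lambda>(l, k). if R l k then (2::real) ^ (d k * B ^ J l) else 0)"
  define V where "V = {p. p permutes {0..<q} \<and> (\<forall>i<q. R i (p i))}"
  define E where "E p = (\<Sum>i<q. d (p i) * B ^ J i)" for p :: "nat \<Rightarrow> nat"
  have p_less: "p i < q" if "p permutes {0..<q}" "i < q" for p i
    using that permutes_in_image[of p "{0..<q}" i] by auto
  have prod_A: "(\<Prod>i = 0..<q. A $$ (i, p i)) = (if p \<in> V then 2 ^ E p else 0)"
    if p: "p permutes {0..<q}" for p
  proof -
    have "(\<Prod>i = 0..<q. A $$ (i, p i)) = (\<Prod>i<q. if R i (p i) then (2::real) ^ (d (p i) * B ^ J i) else 0)"
      by (rule prod.cong) (auto simp: A_def p_less[OF p])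
    then show ?thesis
      using p by (auto simp: V_def E_def power_sum intro: prod_zero)
  qed
  have "det A = (\<Sum>p | p permutes {0..<q}. of_int (sign p) * (\<Prod>i = 0..<q. A $$ (i, p i)))"
    by (rule det_def') (simp add: A_def)
  also have "\<dots> = (\<Sum>p\<in>V. of_int (sign p) * 2 ^ E p)"
    by (rule sum.mono_neutral_cong_right) (auto simp: V_def prod_A finite_permutations)
  finally have det_A: "det A = of_int (\<Sum>p\<in>V. sign p * 2 ^ E p)"
    by simp
  have "inj_on E V"
  proof (rule inj_onI)
    fix p p' assume p: "p \<in> V" and p': "p' \<in> V" and "E p = E p'"
    have "d (p i) < B \<and> d (p' i) < B" if "i < q" for i
      using d_less p_less p p' that by (auto simp: V_def)
    then have "\<forall>i\<in>{..<q}. d (p i) = d (p' i)"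
      using \<open>E p = E p'\<close> by (intro digit_expansion_inj[OF finite_lessThan inj_J]) (auto simp: E_def)
    then have "p i = p' i" if "i < q" for i
      using that inj_d p p' p_less by (auto simp: V_def inj_on_def)
    moreover have "p i = p' i" if "\<not> i < q" for i
      using that p p' by (auto simp: V_def permutes_not_in)
    ultimately show "p = p'" by (metis ext)
  qed
  moreover have "finite V" by (simp add: V_def finite_permutations)
  moreover have "\<forall>p\<in>V. \<bar>sign p\<bar> < 2" by (simp add: sign_def)
  ultimately have "(\<Sum>p\<in>V. sign p * 2 ^ E p) = 0 \<Longrightarrow> \<forall>p\<in>V. sign p = 0"
    by (intro sum_signed_digits_inj_eq_0D) auto
  moreover have "id \<in> V" by (auto simp: V_def R_diag)
  ultimately have "(\<Sum>p\<in>V. sign p * 2 ^ E p) \<noteq> 0"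
    by (metis sign_id zero_neq_one)
  then show ?thesis
    using det_A unfolding A_def[symmetric] by (metis of_int_eq_0_iff)
qed

definition pow2_entry :: "(nat \<Rightarrow> nat set) \<Rightarrow> nat \<Rightarrow> nat \<Rightarrow> nat \<Rightarrow> real" where
  "pow2_entry S B j c = (if c \<in> S j then 2 ^ (c * B ^ j) else 0)"

lemma pow2_pattern_system_trivial:
  assumes "finite Q" and inj_f: "inj_on f Q" and diag: "\<forall>c\<in>Q. c \<in> S (f c)"
    and less_B: "\<forall>c\<in>Q. c < B"
    and sol: "\<forall>c\<in>Q. (\<Sum>c'\<in>Q. \<alpha> c' * pow2_entry S B (f c) c') = 0"
  shows "\<forall>c\<in>Q. \<alpha> c = 0"
proof -
  define qs where "qs = sorted_list_of_set Q"
  define q where "q = length qs"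
  have bij: "bij_betw ((!) qs) {..<q} Q"
    using \<open>finite Q\<close> by (intro bij_betw_nth) (auto simp: qs_def q_def)
  then have qs_in: "qs ! l \<in> Q" if "l < q" for l
    using that by (auto simp: bij_betw_def)
  define A where "A = mat q q (\<lambda>(l, k). if qs ! k \<in> S (f (qs ! l))
    then (2::real) ^ (qs ! k * B ^ f (qs ! l)) else 0)"
  have "det A \<noteq> 0"
    unfolding A_def using bij inj_f diag less_B qs_in
    by (intro det_pow2_pattern_neq_0[where J = "\<lambda>l. f (qs ! l)" and d = "(!) qs", simplified])
      (auto simp: bij_betw_def inj_on_def)
  moreover have "A *\<^sub>v vec q (\<lambda>k. \<alpha> (qs ! k)) = 0\<^sub>v q"
  proof (rule eq_vecI)
    fix l assume "l < dim_vec (0\<^sub>v q)"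
    then have l: "l < q" by simp
    have "vec_index (A *\<^sub>v vec q (\<lambda>k. \<alpha> (qs ! k))) l
        = (\<Sum>k<q. \<alpha> (qs ! k) * pow2_entry S B (f (qs ! l)) (qs ! k))"
      using l by (auto simp: A_def scalar_prod_def pow2_entry_def atLeast0LessThan intro!: sum.cong)
    also have "\<dots> = (\<Sum>c\<in>Q. \<alpha> c * pow2_entry S B (f (qs ! l)) c)"
      by (rule sum.reindex_bij_betw[OF bij])
    also have "\<dots> = 0"
      using sol qs_in[OF l] by auto
    finally show "vec_index (A *\<^sub>v vec q (\<lambda>k. \<alpha> (qs ! k))) l = vec_index (0\<^sub>v q) l"
      using l by simp
  qed (simp add: A_def)
  ultimately have "vec q (\<lambda>k. \<alpha> (qs ! k)) = 0\<^sub>v q"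
    using det_0_iff_vec_prod_zero_field[of A q] vec_carrier[of q] unfolding A_def by (meson mat_carrier)
  then have "\<alpha> (qs ! k) = 0" if "k < q" for k
    using that by (metis index_vec index_zero_vec(1))
  then show ?thesis
    using bij by (auto simp: bij_betw_def)
qed

section \<open>Hall's marriage theorem\<close>

definition has_sdr :: "'a set \<Rightarrow> ('a \<Rightarrow> 'b set) \<Rightarrow> bool" where
  "has_sdr X N \<longleftrightarrow> (\<exists>f. inj_on f X \<and> (\<forall>x\<in>X. f x \<in> N x))"

definition hall_condition :: "'a set \<Rightarrow> ('a \<Rightarrow> 'b set) \<Rightarrow> bool" where
  "hall_condition X N \<longleftrightarrow> (\<forall>Y\<subseteq>X. card Y \<le> card (\<Union>(N ` Y)))"

lemma has_sdr_glue:
  assumes "Y \<subseteq> X" and "has_sdr Y (\<lambda>x. N x \<inter> U)" and "has_sdr (X - Y) (\<lambda>x. N x - U)"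
  shows "has_sdr X N"
proof -
  obtain f1 where f1: "inj_on f1 Y" "\<forall>x\<in>Y. f1 x \<in> N x \<inter> U"
    using assms(2) by (auto simp: has_sdr_def)
  obtain f2 where f2: "inj_on f2 (X - Y)" "\<forall>x\<in>X - Y. f2 x \<in> N x - U"
    using assms(3) by (auto simp: has_sdr_def)
  define f where "f x = (if x \<in> Y then f1 x else f2 x)" for x
  have "inj_on f Y = inj_on f1 Y" and "inj_on f (X - Y) = inj_on f2 (X - Y)"
    by (rule inj_on_cong, simp add: f_def)+
  then have "inj_on f Y" and "inj_on f (X - Y)"
    using f1(1) f2(1) by simp_all
  moreover have "f ` Y \<inter> f ` (X - Y) = {}"
    using f1(2) f2(2) by (force simp: f_def)
  moreover have "Y - (X - Y) = Y" and "X - Y - Y = X - Y"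
    by auto
  ultimately have "inj_on f (Y \<union> (X - Y))"
    unfolding inj_on_Un by simp
  moreover have "\<forall>x\<in>X. f x \<in> N x"
    using f1(2) f2(2) by (auto simp: f_def)
  ultimately show ?thesis
    using assms(1) by (auto simp: has_sdr_def Un_absorb1)
qed

lemma hall_condition_finite_Union:
  assumes "hall_condition X N" and "Y \<subseteq> X" and "finite Y"
  shows "finite (\<Union>(N ` Y))"
proof (cases "Y = {}")
  case False
  then have "0 < card Y" using assms(3) by auto
  also have "card Y \<le> card (\<Union>(N ` Y))" using assms(1,2) by (auto simp: hall_condition_def)
  finally show ?thesis by (rule card_ge_0_finite)
qed simp

lemma hall_condition_Diff_point:
  assumes "\<forall>Y\<subseteq>X. Y \<noteq> {} \<longrightarrow> Y \<noteq> X \<longrightarrow> card Y < card (\<Union>(N ` Y))" and "x \<in> X"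
  shows "hall_condition (X - {x}) (\<lambda>z. N z - {y})"
  unfolding hall_condition_def
proof (intro allI impI)
  fix Y assume Y: "Y \<subseteq> X - {x}"
  show "card Y \<le> card (\<Union>z\<in>Y. N z - {y})"
  proof (cases "Y = {}")
    case False
    then have "card Y < card (\<Union>(N ` Y))" using assms Y by blast
    moreover have "(\<Union>z\<in>Y. N z - {y}) = \<Union>(N ` Y) - {y}" by blast
    ultimately show ?thesis by (auto simp: card_Diff_singleton_if)
  qed simp
qed

lemma hall_condition_Diff_tight:
  assumes hall: "hall_condition X N" and "finite X" and "Y0 \<subseteq> X"
    and tight: "card (\<Union>(N ` Y0)) \<le> card Y0"
  shows "hall_condition (X - Y0) (\<lambda>z. N z - \<Union>(N ` Y0))"
  unfolding hall_condition_def
proof (intro allI impI)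
  fix Z assume Z: "Z \<subseteq> X - Y0"
  let ?U = "\<Union>(N ` Y0)"
  have fin: "finite Z" "finite Y0"
    using Z assms(2,3) by (meson Diff_subset finite_subset subset_trans)+
  have "Z \<union> Y0 \<subseteq> X" using Z assms(3) by auto
  then have fin_U: "finite (\<Union>(N ` (Z \<union> Y0)))"
    using hall fin by (intro hall_condition_finite_Union) auto
  have "card Z + card Y0 = card (Z \<union> Y0)"
    using Z fin by (intro card_Un_disjoint[symmetric]) auto
  also have "\<dots> \<le> card (\<Union>(N ` (Z \<union> Y0)))"
    using hall \<open>Z \<union> Y0 \<subseteq> X\<close> unfolding hall_condition_def by blast
  also have "\<Union>(N ` (Z \<union> Y0)) = (\<Union>z\<in>Z. N z - ?U) \<union> ?U" by blast
  also have "card \<dots> = card (\<Union>z\<in>Z. N z - ?U) + card ?U"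
    using fin_U by (intro card_Un_disjoint) auto
  finally show "card Z \<le> card (\<Union>z\<in>Z. N z - ?U)" using tight by simp
qed

theorem hall_marriage:
  assumes "finite X" and "hall_condition X N"
  shows "has_sdr X N"
  using assms
proof (induction "card X" arbitrary: X N rule: less_induct)
  case less
  note hall = \<open>hall_condition X N\<close>
  have IH: "has_sdr X' N'" if "X' \<subset> X" "hall_condition X' N'" for X' and N' :: "'a \<Rightarrow> 'b set"
  proof (rule less.hyps)
    show "card X' < card X" using that(1) less.prems(1) by (rule psubset_card_mono[rotated])
    show "finite X'" using that(1) less.prems(1) by (auto intro: finite_subset)
  qed (fact that(2))
  show ?case
  proof (cases "\<forall>Y\<subseteq>X. Y \<noteq> {} \<longrightarrow> Y \<noteq> X \<longrightarrow> card Y < card (\<Union>(N ` Y))")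
    case strict: True
    show ?thesis
    proof (cases "X = {}")
      case False
      then obtain x where x: "x \<in> X" by blast
      have "card {x} \<le> card (\<Union>(N ` {x}))"
        using hall x unfolding hall_condition_def by blast
      then have "1 \<le> card (N x)" by simp
      then obtain y where y: "y \<in> N x" by fastforce
      have "has_sdr {x} (\<lambda>z. N z \<inter> {y})"
        using y by (auto simp: has_sdr_def)
      moreover have "has_sdr (X - {x}) (\<lambda>z. N z - {y})"
      proof (rule IH)
        show "X - {x} \<subset> X" using x by blast
        show "hall_condition (X - {x}) (\<lambda>z. N z - {y})"
          using strict x by (rule hall_condition_Diff_point)
      qed
      ultimately show ?thesis
        using x by (intro has_sdr_glue[of "{x}" X N "{y}"]) auto
    qed (simp add: has_sdr_def)
  next
    case False
    then obtain Y0 where Y0: "Y0 \<subseteq> X" "Y0 \<noteq> {}" "Y0 \<noteq> X" "card (\<Union>(N ` Y0)) \<le> card Y0"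
      by (auto simp: not_less)
    have "has_sdr Y0 N"
      using hall Y0 by (intro IH) (auto simp: hall_condition_def)
    then have "has_sdr Y0 (\<lambda>x. N x \<inter> \<Union>(N ` Y0))"
      by (auto simp: has_sdr_def)
    moreover have "has_sdr (X - Y0) (\<lambda>x. N x - \<Union>(N ` Y0))"
      using Y0 less.prems(1) hall by (intro IH hall_condition_Diff_tight) auto
    ultimately show ?thesis
      using Y0(1) by (rule has_sdr_glue[rotated])
  qed
qed

section \<open>Admissible support patterns\<close>

lemma card_add_le_if_disjoint:
  assumes "A \<union> B \<subseteq> C" and "A \<inter> B = {}" and "finite C"
  shows "card A + card B \<le> card C"
proof -
  have "finite A" "finite B" using assms(1,3) finite_subset by auto
  then have "card A + card B = card (A \<union> B)" using assms(2) by (simp add: card_Un_disjoint)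
  also have "\<dots> \<le> card C" using assms(1,3) by (rule card_mono[rotated])
  finally show ?thesis .
qed

definition linking_rows :: "nat \<Rightarrow> (nat \<Rightarrow> nat set) \<Rightarrow> nat set \<Rightarrow> nat set \<Rightarrow> nat set" where
  "linking_rows m S Q P = {j. j < m \<and> S j \<inter> Q \<noteq> {} \<and> S j \<inter> P \<noteq> {}}"

lemma linking_rows_commute: "linking_rows m S Q P = linking_rows m S P Q"
  by (auto simp: linking_rows_def)

lemma finite_linking_rows [simp]: "finite (linking_rows m S Q P)"
  by (simp add: linking_rows_def)

definition admissible_pattern :: "nat \<Rightarrow> nat \<Rightarrow> (nat \<Rightarrow> nat set) \<Rightarrow> bool" where
  "admissible_pattern n m S \<longleftrightarrow>
     (\<forall>j<m. S j \<noteq> {} \<and> S j \<subseteq> {..<n}) \<and>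
     (\<forall>c<n. card {j. j < m \<and> c \<in> S j} \<le> n - 1) \<and>
     (\<forall>Q P. Q \<subseteq> {..<n} \<longrightarrow> P \<subseteq> {..<n} \<longrightarrow> Q \<inter> P = {} \<longrightarrow> Q \<noteq> {} \<longrightarrow> P \<noteq> {} \<longrightarrow>
        card Q + card P \<le> card (linking_rows m S Q P) + 1)"

lemma admissible_patternI:
  assumes "\<And>j. j < m \<Longrightarrow> S j \<noteq> {} \<and> S j \<subseteq> {..<n}"
    and "\<And>c. c < n \<Longrightarrow> card {j. j < m \<and> c \<in> S j} \<le> n - 1"
    and "\<And>Q P. Q \<subseteq> {..<n} \<Longrightarrow> P \<subseteq> {..<n} \<Longrightarrow> Q \<inter> P = {} \<Longrightarrow> Q \<noteq> {} \<Longrightarrow> P \<noteq> {} \<Longrightarrow>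
      card Q + card P \<le> card (linking_rows m S Q P) + 1"
  shows "admissible_pattern n m S"
  using assms by (auto simp: admissible_pattern_def)

lemma
  assumes "admissible_pattern n m S"
  shows admissible_pattern_support: "j < m \<Longrightarrow> S j \<noteq> {} \<and> S j \<subseteq> {..<n}"
    and admissible_pattern_degree: "c < n \<Longrightarrow> card {j. j < m \<and> c \<in> S j} \<le> n - 1"
    and admissible_pattern_linking: "Q \<subseteq> {..<n} \<Longrightarrow> P \<subseteq> {..<n} \<Longrightarrow> Q \<inter> P = {} \<Longrightarrow>
      Q \<noteq> {} \<Longrightarrow> P \<noteq> {} \<Longrightarrow> card Q + card P \<le> card (linking_rows m S Q P) + 1"
  using assms by (auto simp: admissible_pattern_def)

lemma admissible_pattern_one: "admissible_pattern 1 0 S"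
  by (auto simp: admissible_pattern_def lessThan_Suc)

definition extend_pattern :: "nat \<Rightarrow> nat \<Rightarrow> (nat \<Rightarrow> nat set) \<Rightarrow> nat \<Rightarrow> nat set" where
  "extend_pattern n m S j = (if j < m then S j else {j - m, n})"

lemma linking_rows_extend_pattern:
  assumes adm: "admissible_pattern n m S"
    and Q: "Q \<subseteq> {..n}" and P: "P \<subseteq> {..n}" and disj: "Q \<inter> P = {}"
    and "P \<noteq> {}" and "n \<in> Q"
  shows "card Q + card P \<le> card (linking_rows (m + n) (extend_pattern n m S) Q P) + 1"
proof -
  let ?R = "linking_rows (m + n) (extend_pattern n m S) Q P"
  define E where "E = (\<lambda>i. m + i) ` P"
  have P_less: "P \<subseteq> {..<n}" using P disj \<open>n \<in> Q\<close> by (auto simp: subset_iff le_less)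
  then have "finite P" by (rule finite_subset) simp
  have "E \<subseteq> ?R" using P_less \<open>n \<in> Q\<close> by (auto simp: E_def linking_rows_def extend_pattern_def)
  have card_E: "card E = card P" by (simp add: E_def card_image)
  show ?thesis
  proof (cases "Q = {n}")
    case True
    then show ?thesis using card_E card_mono[OF _ \<open>E \<subseteq> ?R\<close>] by simp
  next
    case False
    define Q' where "Q' = Q - {n}"
    have "Q' \<subseteq> {..<n}" "Q' \<noteq> {}" using Q False \<open>n \<in> Q\<close> by (auto simp: Q'_def le_less)
    then have "card Q' + card P \<le> card (linking_rows m S Q' P) + 1"
      using adm P_less disj \<open>P \<noteq> {}\<close> by (intro admissible_pattern_linking) (auto simp: Q'_def)
    moreover have "card (linking_rows m S Q' P) + card E \<le> card ?R"
      using \<open>E \<subseteq> ?R\<close>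
      by (intro card_add_le_if_disjoint)
        (auto simp: linking_rows_def extend_pattern_def Q'_def E_def)
    moreover have "card Q = Suc (card Q')"
      using Q \<open>n \<in> Q\<close> by (metis Q'_def card_Suc_Diff1 finite_atMost finite_subset)
    moreover have "1 \<le> card P" using \<open>finite P\<close> \<open>P \<noteq> {}\<close> by (simp add: Suc_le_eq card_gt_0_iff)
    ultimately show ?thesis using card_E by linarith
  qed
qed

lemma extend_pattern_degree:
  assumes adm: "admissible_pattern n m S" and "1 \<le> n" and c: "c < Suc n"
  shows "card {j. j < m + n \<and> c \<in> extend_pattern n m S j} \<le> Suc n - 1"
proof -
  let ?rows = "{j. j < m + n \<and> c \<in> extend_pattern n m S j}"
  show ?thesis
  proof (cases "c = n")
    case True
    have "n \<notin> S j" if "j < m" for j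
      using admissible_pattern_support[OF adm that] by auto
    then have "?rows \<subseteq> {m..<m + n}"
      using True by (auto simp: extend_pattern_def split: if_splits)
    then show ?thesis using card_mono[of "{m..<m + n}"] by fastforce
  next
    case False
    then have "?rows \<subseteq> insert (m + c) {j. j < m \<and> c \<in> S j}"
      by (auto simp: extend_pattern_def)
    then have "card ?rows \<le> card (insert (m + c) {j. j < m \<and> c \<in> S j})"
      by (intro card_mono) auto
    also have "\<dots> \<le> Suc (card {j. j < m \<and> c \<in> S j})"
      by (simp add: card_insert_if)
    also have "\<dots> \<le> Suc n - 1"
      using admissible_pattern_degree[OF adm, of c] False c \<open>1 \<le> n\<close> by simp
    finally show ?thesis .
  qed
qed

lemma admissible_pattern_extend:
  assumes adm: "admissible_pattern n m S" and "1 \<le> n"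
  shows "admissible_pattern (Suc n) (m + n) (extend_pattern n m S)"
proof (rule admissible_patternI)
  fix j assume "j < m + n"
  then show "extend_pattern n m S j \<noteq> {} \<and> extend_pattern n m S j \<subseteq> {..<Suc n}"
    using admissible_pattern_support[OF adm, of j]
    by (auto simp: extend_pattern_def lessThan_Suc intro: subset_insertI2)
next
  fix c assume "c < Suc n"
  then show "card {j. j < m + n \<and> c \<in> extend_pattern n m S j} \<le> Suc n - 1"
    by (rule extend_pattern_degree[OF assms])
next
  fix Q P assume Q: "Q \<subseteq> {..<Suc n}" and P: "P \<subseteq> {..<Suc n}" and disj: "Q \<inter> P = {}"
    and "Q \<noteq> {}" and "P \<noteq> {}"
  let ?S' = "extend_pattern n m S"
  consider "n \<in> Q" | "n \<in> P" | "n \<notin> Q" "n \<notin> P" by blast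
  then show "card Q + card P \<le> card (linking_rows (m + n) ?S' Q P) + 1"
  proof cases
    case 1
    then show ?thesis
      using Q P disj \<open>P \<noteq> {}\<close> by (intro linking_rows_extend_pattern[OF adm]) auto
  next
    case 2
    then have "card P + card Q \<le> card (linking_rows (m + n) ?S' P Q) + 1"
      using Q P disj \<open>Q \<noteq> {}\<close> by (intro linking_rows_extend_pattern[OF adm]) auto
    then show ?thesis by (simp add: linking_rows_commute add.commute)
  next
    case 3
    then have "Q \<subseteq> {..<n}" "P \<subseteq> {..<n}" using Q P by (auto simp: subset_iff less_Suc_eq)
    then have "card Q + card P \<le> card (linking_rows m S Q P) + 1"
      using disj \<open>Q \<noteq> {}\<close> \<open>P \<noteq> {}\<close> by (rule admissible_pattern_linking[OF adm])
    moreover have "card (linking_rows m S Q P) \<le> card (linking_rows (m + n) ?S' Q P)"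
      by (intro card_mono) (auto simp: linking_rows_def extend_pattern_def)
    ultimately show ?thesis by simp
  qed
qed

definition base_pattern :: "nat \<Rightarrow> nat \<Rightarrow> nat \<Rightarrow> nat set" where
  "base_pattern n k j =
    (if j < k then {..k} else if j < 2 * k + 1 then insert (j - k) {k + 1..<n} else {..<n})"

lemma base_pattern_degree:
  assumes "2 \<le> n" and "k \<le> n - 2" and "c < n"
  shows "card {j. j < n - 1 + k \<and> c \<in> base_pattern n k j} \<le> n - 1"
proof -
  let ?rows = "{j. j < n - 1 + k \<and> c \<in> base_pattern n k j}"
  show ?thesis
  proof (cases "c \<le> k")
    case True
    have "?rows \<subseteq> {..<k} \<union> insert (k + c) {2 * k + 1..<n - 1 + k}"
    proof
      fix j assume j: "j \<in> ?rows"
      show "j \<in> {..<k} \<union> insert (k + c) {2 * k + 1..<n - 1 + k}"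
      proof (cases "k \<le> j \<and> j < 2 * k + 1")
        case True
        then have "c \<in> insert (j - k) {k + 1..<n}" using j by (simp add: base_pattern_def)
        then show ?thesis using True \<open>c \<le> k\<close> by auto
      qed (use j in auto)
    qed
    then have "card ?rows \<le> card ({..<k} \<union> insert (k + c) {2 * k + 1..<n - 1 + k})"
      by (intro card_mono) auto
    also have "\<dots> \<le> card {..<k} + card (insert (k + c) {2 * k + 1..<n - 1 + k})"
      by (rule card_Un_le)
    also have "\<dots> \<le> k + Suc (n - 2 - k)"
      by (simp add: card_insert_if)
    finally show ?thesis using assms by linarith
  next
    case False
    then have "c \<notin> base_pattern n k j" if "j < k" for j
      using that by (simp add: base_pattern_def)
    then have "?rows \<subseteq> {k..<n - 1 + k}"
      by auto (meson leI)
    then have "card ?rows \<le> card {k..<n - 1 + k}"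
      by (intro card_mono) auto
    then show ?thesis by simp
  qed
qed

lemma full_rows_subset_linking_rows_base_pattern:
  assumes "Q \<subseteq> {..<n}" and "P \<subseteq> {..<n}" and "Q \<noteq> {}" and "P \<noteq> {}"
  shows "{2 * k + 1..<n - 1 + k} \<subseteq> linking_rows (n - 1 + k) (base_pattern n k) Q P"
proof
  fix j assume j: "j \<in> {2 * k + 1..<n - 1 + k}"
  then have "base_pattern n k j = {..<n}" by (simp add: base_pattern_def)
  then show "j \<in> linking_rows (n - 1 + k) (base_pattern n k) Q P"
    using j assms by (auto simp: linking_rows_def Int_absorb1 Int_absorb2)
qed

lemma base_pattern_linking_high_low:
  assumes "2 \<le> n" and "k \<le> n - 2"
    and Q: "Q \<subseteq> {..<n}" and P: "P \<subseteq> {..k}" and disj: "Q \<inter> P = {}" and "P \<noteq> {}"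
    and Q_high: "Q \<inter> {k + 1..<n} \<noteq> {}"
  shows "card Q + card P \<le> card (linking_rows (n - 1 + k) (base_pattern n k) Q P) + 1"
proof -
  let ?R = "linking_rows (n - 1 + k) (base_pattern n k) Q P"
  define F where "F = {2 * k + 1..<n - 1 + k}"
  define E where "E = (\<lambda>i. k + i) ` P"
  have "Q \<noteq> {}" using Q_high by blast
  have "P \<subseteq> {..<n}" using P assms(1,2) by auto
  have "F \<subseteq> ?R"
    unfolding F_def using Q \<open>P \<subseteq> {..<n}\<close> \<open>Q \<noteq> {}\<close> \<open>P \<noteq> {}\<close>
    by (rule full_rows_subset_linking_rows_base_pattern)
  have "E \<subseteq> ?R"
  proof
    fix j assume "j \<in> E"
    then obtain i where i: "i \<in> P" "j = k + i" by (auto simp: E_def)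
    with P have "i \<le> k" by auto
    then have "base_pattern n k j = insert i {k + 1..<n}" using i by (simp add: base_pattern_def)
    then show "j \<in> ?R" using i \<open>i \<le> k\<close> Q_high assms(1,2) by (auto simp: linking_rows_def)
  qed
  have card_F: "card F = n - 2 - k" by (simp add: F_def)
  have card_E: "card E = card P" by (simp add: E_def card_image)
  have "1 \<le> card P"
    using P \<open>P \<noteq> {}\<close> by (simp add: Suc_le_eq card_gt_0_iff finite_subset)
  show ?thesis
  proof (cases "Q \<inter> {..k} = {}")
    case True
    then have "card Q \<le> card {k + 1..<n}"
      using Q by (intro card_mono) (auto simp: subset_iff)
    moreover have "card F + card E \<le> card ?R"
      using \<open>F \<subseteq> ?R\<close> \<open>E \<subseteq> ?R\<close> P by (intro card_add_le_if_disjoint) (auto simp: F_def E_def)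
    ultimately show ?thesis using card_F card_E assms(1,2) by simp
  next
    case False
    define B where "B = {..<k}"
    have "B \<subseteq> ?R"
    proof
      fix j assume "j \<in> B"
      then have "base_pattern n k j = {..k}" by (simp add: B_def base_pattern_def)
      then show "j \<in> ?R"
        using \<open>j \<in> B\<close> False P \<open>P \<noteq> {}\<close> assms(1,2)
        by (auto simp: B_def linking_rows_def Int_absorb1 Int_commute)
    qed
    have "card (F \<union> B) + card E \<le> card ?R"
      using \<open>F \<subseteq> ?R\<close> \<open>E \<subseteq> ?R\<close> \<open>B \<subseteq> ?R\<close> P
      by (intro card_add_le_if_disjoint) (auto simp: F_def E_def B_def)
    moreover have "card (F \<union> B) = card F + k"
      by (subst card_Un_disjoint) (auto simp: F_def B_def)
    moreover have "card Q + card P \<le> n"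
      using Q P disj assms(1,2) by (intro card_add_le_if_disjoint[of _ _ "{..<n}", simplified]) auto
    ultimately show ?thesis using card_F card_E \<open>1 \<le> card P\<close> assms(1,2) by linarith
  qed
qed

lemma base_pattern_linking_high_high:
  assumes n: "2 \<le> n" and k: "k \<le> n - 2"
    and Q: "Q \<subseteq> {..<n}" and P: "P \<subseteq> {..<n}" and disj: "Q \<inter> P = {}"
    and Q_high: "Q \<inter> {k + 1..<n} \<noteq> {}" and P_high: "P \<inter> {k + 1..<n} \<noteq> {}"
  shows "card Q + card P \<le> card (linking_rows (n - 1 + k) (base_pattern n k) Q P) + 1"
proof -
  let ?R = "linking_rows (n - 1 + k) (base_pattern n k) Q P"
  have "{2 * k + 1..<n - 1 + k} \<subseteq> ?R"
    using Q P Q_high P_high by (intro full_rows_subset_linking_rows_base_pattern) auto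
  moreover have "{k..<2 * k + 1} \<subseteq> ?R"
  proof
    fix j assume j: "j \<in> {k..<2 * k + 1}"
    then have "base_pattern n k j = insert (j - k) {k + 1..<n}" by (simp add: base_pattern_def)
    then show "j \<in> ?R" using j Q_high P_high n k by (auto simp: linking_rows_def)
  qed
  ultimately have "card {2 * k + 1..<n - 1 + k} + card {k..<2 * k + 1} \<le> card ?R"
    by (intro card_add_le_if_disjoint) auto
  moreover have "card Q + card P \<le> n"
    using Q P disj by (intro card_add_le_if_disjoint[of _ _ "{..<n}", simplified]) auto
  ultimately show ?thesis using n k by simp
qed

lemma base_pattern_linking_low_low:
  assumes n: "2 \<le> n" and k: "k \<le> n - 2"
    and Q: "Q \<subseteq> {..k}" and P: "P \<subseteq> {..k}" and disj: "Q \<inter> P = {}"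
    and "Q \<noteq> {}" and "P \<noteq> {}"
  shows "card Q + card P \<le> card (linking_rows (n - 1 + k) (base_pattern n k) Q P) + 1"
proof -
  let ?R = "linking_rows (n - 1 + k) (base_pattern n k) Q P"
  have "{2 * k + 1..<n - 1 + k} \<subseteq> ?R"
    using Q P \<open>Q \<noteq> {}\<close> \<open>P \<noteq> {}\<close> n k
    by (intro full_rows_subset_linking_rows_base_pattern) auto
  moreover have "{..<k} \<subseteq> ?R"
  proof
    fix j assume "j \<in> {..<k}"
    then have "base_pattern n k j = {..k}" by (simp add: base_pattern_def)
    then show "j \<in> ?R"
      using \<open>j \<in> {..<k}\<close> Q P \<open>Q \<noteq> {}\<close> \<open>P \<noteq> {}\<close>
      by (auto simp: linking_rows_def Int_absorb1 Int_absorb2)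
  qed
  ultimately have "card {2 * k + 1..<n - 1 + k} + card {..<k} \<le> card ?R"
    by (intro card_add_le_if_disjoint) auto
  moreover have "card Q + card P \<le> card {..k}"
    using Q P disj by (intro card_add_le_if_disjoint) auto
  ultimately show ?thesis using n k by simp
qed

lemma base_pattern_linking:
  assumes n: "2 \<le> n" and k: "k \<le> n - 2"
    and Q: "Q \<subseteq> {..<n}" and P: "P \<subseteq> {..<n}" and disj: "Q \<inter> P = {}"
    and "Q \<noteq> {}" and "P \<noteq> {}"
  shows "card Q + card P \<le> card (linking_rows (n - 1 + k) (base_pattern n k) Q P) + 1"
proof -
  let ?H = "{k + 1..<n}"
  have low: "X \<subseteq> {..k}" if "X \<subseteq> {..<n}" "X \<inter> ?H = {}" for X
    using that by (auto simp: subset_iff)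
  consider "Q \<inter> ?H \<noteq> {}" "P \<inter> ?H \<noteq> {}" | "Q \<inter> ?H \<noteq> {}" "P \<inter> ?H = {}"
    | "Q \<inter> ?H = {}" "P \<inter> ?H \<noteq> {}" | "Q \<inter> ?H = {}" "P \<inter> ?H = {}"
    by blast
  then show ?thesis
  proof cases
    case 1
    then show ?thesis by (rule base_pattern_linking_high_high[OF n k Q P disj])
  next
    case 2
    then show ?thesis
      using low[OF P] \<open>P \<noteq> {}\<close> by (intro base_pattern_linking_high_low[OF n k Q _ disj]) auto
  next
    case 3
    then have "card P + card Q \<le> card (linking_rows (n - 1 + k) (base_pattern n k) P Q) + 1"
      using low[OF Q] disj \<open>Q \<noteq> {}\<close> by (intro base_pattern_linking_high_low[OF n k P]) auto
    then show ?thesis by (simp add: linking_rows_commute add.commute)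
  next
    case 4
    then show ?thesis
      using low[OF Q] low[OF P] disj \<open>Q \<noteq> {}\<close> \<open>P \<noteq> {}\<close>
      by (intro base_pattern_linking_low_low[OF n k]) auto
  qed
qed

lemma admissible_pattern_base:
  assumes "2 \<le> n" and "k \<le> n - 2"
  shows "admissible_pattern n (n - 1 + k) (base_pattern n k)"
proof (rule admissible_patternI)
  fix j assume "j < n - 1 + k"
  then show "base_pattern n k j \<noteq> {} \<and> base_pattern n k j \<subseteq> {..<n}"
    using assms by (auto simp: base_pattern_def lessThan_empty_iff)
next
  fix c assume "c < n"
  then show "card {j. j < n - 1 + k \<and> c \<in> base_pattern n k j} \<le> n - 1"
    by (rule base_pattern_degree[OF assms])
next
  fix Q P assume "Q \<subseteq> {..<n}" "P \<subseteq> {..<n}" "Q \<inter> P = {}" "Q \<noteq> {}" "P \<noteq> {}"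
  then show "card Q + card P \<le> card (linking_rows (n - 1 + k) (base_pattern n k) Q P) + 1"
    by (rule base_pattern_linking[OF assms])
qed

lemma triangular_Suc: "Suc n * (Suc n + 1) div 2 = n * (n + 1) div 2 + Suc n"
proof -
  have "Suc n * (Suc n + 1) = n * (n + 1) + 2 * Suc n" by (simp add: algebra_simps)
  then show ?thesis by simp
qed

lemma admissible_pattern_exists:
  assumes "1 \<le> n" and "2 * n - 1 \<le> N" and "N \<le> n * (n + 1) div 2"
  shows "\<exists>m S. n + m = N \<and> admissible_pattern n m S"
  using assms
proof (induction n arbitrary: N)
  case (Suc n)
  show ?case
  proof (cases "n = 0")
    case True
    then have "N = 1" using Suc.prems(2,3) by simp
    then show ?thesis using True admissible_pattern_one by auto
  next
    case False
    then have "1 \<le> n" by simp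
    show ?thesis
    proof (cases "N \<le> 3 * Suc n - 3")
      case True
      define k where "k = N - (2 * Suc n - 1)"
      have "k \<le> Suc n - 2" using True by (simp add: k_def)
      then have "admissible_pattern (Suc n) (Suc n - 1 + k) (base_pattern (Suc n) k)"
        using \<open>1 \<le> n\<close> by (intro admissible_pattern_base) auto
      moreover have "Suc n + (Suc n - 1 + k) = N" using Suc.prems(2) by (simp add: k_def)
      ultimately show ?thesis by blast
    next
      case False
      have "2 * n - 1 \<le> N - Suc n" using False by simp
      moreover have "N - Suc n \<le> n * (n + 1) div 2" using Suc.prems(3) triangular_Suc[of n] by simp
      ultimately obtain m S where mS: "n + m = N - Suc n" "admissible_pattern n m S"
        using Suc.IH[OF \<open>1 \<le> n\<close>] by blast
      have "admissible_pattern (Suc n) (m + n) (extend_pattern n m S)"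
        using mS(2) \<open>1 \<le> n\<close> by (rule admissible_pattern_extend)
      moreover have "Suc n + (m + n) = N" using mS(1) False by simp
      ultimately show ?thesis by blast
    qed
  qed
qed simp

section \<open>Criteria for phase retrieval and exact redundancy\<close>

no_notation Matrix.vec_index (infixl \<open>$\<close> 100)
no_notation Matrix.scalar_prod (infix \<open>\<bullet>\<close> 70)

lemma exists_orthogonal_nonzero:
  fixes W :: "(real^'n) set"
  assumes "finite W" and "card W < CARD('n)"
  obtains u where "u \<noteq> 0" and "\<forall>w\<in>W. u \<bullet> w = 0"
proof -
  have "dim W < DIM(real^'n)"
    using dim_le_card[OF span_superset assms(1)] assms(2) by simp
  then obtain u where "u \<noteq> 0" "\<And>w. w \<in> span W \<Longrightarrow> real_inner_class.orthogonal u w"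
    using orthogonal_to_subspace_exists[of W] by blast
  then show ?thesis
    using that span_base[of _ W] by (auto simp: real_inner_class.orthogonal_def)
qed

lemma is_frame_if_axes:
  assumes "\<And>c. axis c 1 \<in> f ` {0..<N}"
  shows "is_frame N (f :: nat \<Rightarrow> real^'n)"
proof -
  have "Basis \<subseteq> f ` {0..<N}"
    using assms by (auto simp: Basis_vec_def)
  then have "span Basis \<subseteq> span (f ` {0..<N})"
    by (rule span_mono)
  then show ?thesis
    by (auto simp: is_frame_def)
qed

lemma phase_retrievableI:
  assumes "\<And>a b. a \<noteq> 0 \<Longrightarrow> b \<noteq> 0 \<Longrightarrow> \<exists>i<N. (a \<bullet> f i) * (b \<bullet> f i) \<noteq> 0"
  shows "phase_retrievable N (f :: nat \<Rightarrow> real^'n)"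
  unfolding phase_retrievable_def
proof (intro allI impI)
  fix x y :: "real^'n"
  assume eq: "\<forall>i<N. \<bar>x \<bullet> f i\<bar> = \<bar>y \<bullet> f i\<bar>"
  have "((x - y) \<bullet> f i) * ((x + y) \<bullet> f i) = 0" if "i < N" for i
  proof -
    have "(x \<bullet> f i)\<^sup>2 = (y \<bullet> f i)\<^sup>2"
      using eq that by (metis power2_abs)
    then show ?thesis
      by (simp add: algebra_simps power2_eq_square)
  qed
  then have "x - y = 0 \<or> x + y = 0"
    using assms by blast
  then show "x = y \<or> x = - y"
    by (auto simp: add_eq_0_iff2)
qed

definition sym_product :: "real^'n \<Rightarrow> real^'n \<Rightarrow> real^'n^'n" where
  "sym_product u v = (\<chi> r c. u $ r * v $ c + v $ r * u $ c)"

lemma sym_product_in_Sym_ops: "sym_product u v \<in> Sym_ops"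
  by (simp add: Sym_ops_def sym_product_def transpose_def Finite_Cartesian_Product.vec_eq_iff)

lemma rank_sym_product_le:
  fixes u v :: "real^'n"
  shows "rank (sym_product u v) \<le> 2"
proof -
  define U :: "real^2^'n" where "U = (\<chi> r k. if k = 1 then u $ r else v $ r)"
  define V :: "real^'n^2" where "V = (\<chi> k c. if k = 1 then v $ c else u $ c)"
  have "sym_product u v = U ** V"
    by (simp add: sym_product_def U_def V_def matrix_matrix_mult_def sum_2 Finite_Cartesian_Product.vec_eq_iff)
  then have "rank (sym_product u v) \<le> rank V"
    by (simp add: rank_mul_le_right)
  also have "\<dots> \<le> 2"
    using rank_bound[of V] by simp
  finally show ?thesis .
qed

lemma quadratic_form_sym_product: "(sym_product u v *v x) \<bullet> x = 2 * ((u \<bullet> x) * (v \<bullet> x))"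
proof -
  have "sym_product u v *v x = (u \<bullet> x) *\<^sub>R v + (v \<bullet> x) *\<^sub>R u"
    by (simp add: sym_product_def matrix_vector_mult_def Finite_Cartesian_Product.vec_eq_iff inner_vec_def
        sum.distrib sum_distrib_left algebra_simps)
  then show ?thesis
    by (simp add: algebra_simps inner_commute)
qed

lemma exact_PR_redundancyI:
  assumes "\<And>i. i < N \<Longrightarrow> \<exists>u v. (u \<bullet> f i) * (v \<bullet> f i) \<noteq> 0 \<and>
      (\<forall>i'<N. i' \<noteq> i \<longrightarrow> (u \<bullet> f i') * (v \<bullet> f i') = 0)"
  shows "exact_PR_redundancy N (f :: nat \<Rightarrow> real^'n)"
  unfolding exact_PR_redundancy_def
proof (intro allI impI)
  fix \<Lambda> assume \<Lambda>: "\<Lambda> \<subset> {0..<N}"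
  obtain i where "i \<in> {0..<N} - \<Lambda>"
    using psubset_imp_ex_mem[OF \<Lambda>] by blast
  then have i: "i < N" "i \<notin> \<Lambda>" by auto
  then obtain u v where uv: "(u \<bullet> f i) * (v \<bullet> f i) \<noteq> 0"
    "\<forall>i'<N. i' \<noteq> i \<longrightarrow> (u \<bullet> f i') * (v \<bullet> f i') = 0"
    using assms by blast
  have "(sym_product u v *v f i') \<bullet> f i' = 0" if "i' \<in> \<Lambda>" for i'
  proof -
    have "i' < N" "i' \<noteq> i" using that \<Lambda> i(2) by auto
    then show ?thesis using uv(2) by (simp add: quadratic_form_sym_product)
  qed
  then have "sym_product u v \<in> ker_Theta f \<Lambda>"
    by (simp add: ker_Theta_def sym_product_in_Sym_ops)
  moreover have "sym_product u v \<notin> ker_Theta f {0..<N}"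
    using i uv(1) by (auto simp: ker_Theta_def quadratic_form_sym_product)
  moreover have "sym_product u v \<in> S2"
    by (simp add: S2_def sym_product_in_Sym_ops rank_sym_product_le)
  ultimately show "ker_Theta f \<Lambda> \<inter> S2 \<noteq> ker_Theta f {0..<N} \<inter> S2"
    by blast
qed

section \<open>The frame of an admissible pattern\<close>

locale pattern_frame =
  fixes h :: "nat \<Rightarrow> 'n::finite" and m :: nat and S :: "nat \<Rightarrow> nat set"
  assumes bij_h: "bij_betw h {..<CARD('n)} UNIV"
    and admissible: "admissible_pattern CARD('n) m S"
begin

definition row :: "nat \<Rightarrow> real^'n" where
  "row j = (\<Sum>i<CARD('n). pow2_entry S (CARD('n) + 1) j i *\<^sub>R axis (h i) 1)"

definition frame_vec :: "nat \<Rightarrow> real^'n" where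
  "frame_vec i = (if i < CARD('n) then axis (h i) 1 else row (i - CARD('n)))"

lemma inj_h: "inj_on h {..<CARD('n)}"
  using bij_h by (rule bij_betw_imp_inj_on)

lemma obtain_h_index:
  obtains i where "i < CARD('n)" and "h i = c"
proof -
  have "c \<in> h ` {..<CARD('n)}"
    using bij_h by (simp add: bij_betw_def)
  then show ?thesis using that by blast
qed

lemma eq_0_if_coords_eq_0:
  assumes "\<And>i. i < CARD('n) \<Longrightarrow> x $ h i = 0"
  shows "x = 0"
proof -
  have "x $ c = 0" for c
  proof (rule obtain_h_index[of c])
    fix i assume "i < CARD('n)" "h i = c"
    then show ?thesis using assms[of i] by simp
  qed
  then show ?thesis by (simp add: Finite_Cartesian_Product.vec_eq_iff)
qed

lemma inner_row: "x \<bullet> row j = (\<Sum>i<CARD('n). x $ h i * pow2_entry S (CARD('n) + 1) j i)"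
  by (simp add: row_def inner_sum_right inner_axis mult.commute)

lemma row_nth:
  assumes "c < CARD('n)"
  shows "row j $ h c = pow2_entry S (CARD('n) + 1) j c"
proof -
  have "row j $ h c = axis (h c) 1 \<bullet> row j"
    by (simp add: inner_axis')
  also have "\<dots> = (\<Sum>i<CARD('n). axis (h c) 1 $ h i * pow2_entry S (CARD('n) + 1) j i)"
    by (rule inner_row)
  also have "\<dots> = (\<Sum>i<CARD('n). if i = c then pow2_entry S (CARD('n) + 1) j i else 0)"
    using assms inj_h by (intro sum.cong) (auto simp: axis_def inj_on_def)
  finally show ?thesis
    using assms by simp
qed

lemma inner_frame_vec_axis: "i < CARD('n) \<Longrightarrow> x \<bullet> frame_vec i = x $ h i"
  by (simp add: frame_vec_def inner_axis)

lemma inner_axis_frame_vec: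
  assumes "c < CARD('n)" and "i < CARD('n)"
  shows "axis (h c) 1 \<bullet> frame_vec i = (if i = c then 1 else 0)"
  using assms inj_h by (auto simp: frame_vec_def inner_axis_axis inj_on_def)

lemma inner_axis_row:
  assumes "c < CARD('n)"
  shows "axis (h c) 1 \<bullet> row j = pow2_entry S (CARD('n) + 1) j c"
  using row_nth[OF assms] by (simp add: inner_axis')

lemma inner_frame_vec_row: "x \<bullet> frame_vec (CARD('n) + j) = x \<bullet> row j"
  by (simp add: frame_vec_def)

lemma axis_in_frame_vecs: "axis c 1 \<in> frame_vec ` {..<CARD('n)}"
proof (rule obtain_h_index[of c])
  fix i assume "i < CARD('n)" "h i = c"
  then show ?thesis by (force simp: frame_vec_def)
qed

lemma coords_eq_0_if_orthogonal_to_matched_rows: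
  assumes Q: "Q \<subseteq> {..<CARD('n)}" and "inj_on f Q" and "\<forall>c\<in>Q. c \<in> S (f c)"
    and outside: "\<forall>i<CARD('n). i \<notin> Q \<longrightarrow> x $ h i = 0"
    and orth: "\<forall>c\<in>Q. x \<bullet> row (f c) = 0"
  shows "\<forall>c\<in>Q. x $ h c = 0"
proof (rule pow2_pattern_system_trivial)
  show "finite Q" using Q finite_subset by blast
  show "\<forall>c\<in>Q. c < CARD('n) + 1" using Q by auto
  show "\<forall>c\<in>Q. (\<Sum>c'\<in>Q. x $ h c' * pow2_entry S (CARD('n) + 1) (f c) c') = 0"
  proof
    fix c assume "c \<in> Q"
    have "(\<Sum>c'\<in>Q. x $ h c' * pow2_entry S (CARD('n) + 1) (f c) c') = x \<bullet> row (f c)"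
      unfolding inner_row using Q outside by (intro sum.mono_neutral_left) auto
    then show "(\<Sum>c'\<in>Q. x $ h c' * pow2_entry S (CARD('n) + 1) (f c) c') = 0"
      using orth \<open>c \<in> Q\<close> by simp
  qed
qed (use assms in auto)

lemma eq_0_if_orthogonal_to_rows_through:
  assumes c: "c < CARD('n)" and "x $ h c = 0" and orth: "\<forall>j<m. c \<in> S j \<longrightarrow> x \<bullet> row j = 0"
  shows "x = 0"
proof -
  let ?X = "{..<CARD('n)} - {c}"
  define N where "N i = {j. j < m \<and> c \<in> S j \<and> i \<in> S j}" for i
  have "hall_condition ?X N"
    unfolding hall_condition_def
  proof (intro allI impI)
    fix Y assume Y: "Y \<subseteq> ?X"
    show "card Y \<le> card (\<Union>(N ` Y))"
    proof (cases "Y = {}")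
      case False
      have "card {c} + card Y \<le> card (linking_rows m S {c} Y) + 1"
        using Y False c by (intro admissible_pattern_linking[OF admissible]) auto
      moreover have "linking_rows m S {c} Y = \<Union>(N ` Y)"
        by (auto simp: linking_rows_def N_def)
      ultimately show ?thesis by simp
    qed simp
  qed
  then obtain f where "inj_on f ?X" "\<forall>i\<in>?X. f i \<in> N i"
    using hall_marriage[of ?X N] by (auto simp: has_sdr_def)
  then have "\<forall>i\<in>?X. x $ h i = 0"
    using assms by (intro coords_eq_0_if_orthogonal_to_matched_rows) (auto simp: N_def)
  then show "x = 0"
    using assms(2) by (intro eq_0_if_coords_eq_0) (metis Diff_iff lessThan_iff singletonD)
qed

lemma exists_hall_deficient_support:
  assumes "x \<noteq> 0"
  shows "\<exists>Q\<subseteq>{i. i < CARD('n) \<and> x $ h i \<noteq> 0}.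
    card {j. j < m \<and> x \<bullet> row j = 0 \<and> S j \<inter> Q \<noteq> {}} < card Q"
proof (rule ccontr)
  let ?Q = "{i. i < CARD('n) \<and> x $ h i \<noteq> 0}"
  define N where "N i = {j. j < m \<and> x \<bullet> row j = 0 \<and> i \<in> S j}" for i
  assume "\<not> ?thesis"
  moreover have "\<Union>(N ` Q) = {j. j < m \<and> x \<bullet> row j = 0 \<and> S j \<inter> Q \<noteq> {}}" for Q
    by (auto simp: N_def)
  ultimately have "hall_condition ?Q N"
    by (auto simp: hall_condition_def not_less)
  then obtain f where "inj_on f ?Q" "\<forall>i\<in>?Q. f i \<in> N i"
    using hall_marriage[of ?Q N] by (auto simp: has_sdr_def)
  then have "\<forall>i\<in>?Q. x $ h i = 0"
    by (intro coords_eq_0_if_orthogonal_to_matched_rows) (auto simp: N_def)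
  then have "x = 0"
    by (intro eq_0_if_coords_eq_0) auto
  with assms show False ..
qed

lemma complement_property:
  assumes "a \<noteq> 0" and "b \<noteq> 0"
  shows "\<exists>i<CARD('n) + m. (a \<bullet> frame_vec i) * (b \<bullet> frame_vec i) \<noteq> 0"
proof (rule ccontr)
  assume "\<not> ?thesis"
  then have vanish: "(a \<bullet> frame_vec i) * (b \<bullet> frame_vec i) = 0" if "i < CARD('n) + m" for i
    using that by blast
  define Ka where "Ka Q = {j. j < m \<and> a \<bullet> row j = 0 \<and> S j \<inter> Q \<noteq> {}}" for Q
  define Kb where "Kb P = {j. j < m \<and> b \<bullet> row j = 0 \<and> S j \<inter> P \<noteq> {}}" for P
  obtain Q where Q: "Q \<subseteq> {i. i < CARD('n) \<and> a $ h i \<noteq> 0}" "card (Ka Q) < card Q"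
    using exists_hall_deficient_support[OF assms(1)] by (auto simp: Ka_def)
  obtain P where P: "P \<subseteq> {i. i < CARD('n) \<and> b $ h i \<noteq> 0}" "card (Kb P) < card P"
    using exists_hall_deficient_support[OF assms(2)] by (auto simp: Kb_def)
  have "Q \<inter> P = {}"
  proof (rule ccontr)
    assume "Q \<inter> P \<noteq> {}"
    then obtain i where "i < CARD('n)" "a $ h i \<noteq> 0" "b $ h i \<noteq> 0"
      using Q(1) P(1) by blast
    with vanish[of i] show False
      by (simp add: inner_frame_vec_axis)
  qed
  moreover have "Q \<noteq> {}" "P \<noteq> {}"
    using Q(2) P(2) by auto
  ultimately have "card Q + card P \<le> card (linking_rows m S Q P) + 1"
    using Q(1) P(1) by (intro admissible_pattern_linking[OF admissible]) auto
  moreover have "linking_rows m S Q P \<subseteq> Ka Q \<union> Kb P"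
    using vanish[of "CARD('n) + _"] by (auto simp: linking_rows_def Ka_def Kb_def inner_frame_vec_row)
  then have "card (linking_rows m S Q P) \<le> card (Ka Q) + card (Kb P)"
    by (intro order.trans[OF card_mono card_Un_le]) (auto simp: Ka_def Kb_def)
  ultimately show False
    using Q(2) P(2) by linarith
qed

lemma frame_index_cases:
  assumes "i < CARD('n) + m"
  obtains (axis) "i < CARD('n)" | (row) j where "i = CARD('n) + j" and "j < m"
proof (cases "i < CARD('n)")
  case False
  then show ?thesis using assms that(2)[of "i - CARD('n)"] by auto
qed (rule that(1))

lemma exists_isolating_vector_axis:
  assumes i: "i < CARD('n)"
  obtains u where "u $ h i \<noteq> 0" and "\<And>j. j < m \<Longrightarrow> i \<in> S j \<Longrightarrow> u \<bullet> row j = 0"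
proof -
  define D where "D = {j. j < m \<and> i \<in> S j}"
  have "card (row ` D) < CARD('n)"
    using card_image_le[of D row] admissible_pattern_degree[OF admissible i] i
    by (simp add: D_def)
  then obtain u where "u \<noteq> 0" and "\<forall>j\<in>D. u \<bullet> row j = 0"
    using exists_orthogonal_nonzero[of "row ` D"] by (auto simp: D_def)
  moreover from this have "u $ h i \<noteq> 0"
    using eq_0_if_orthogonal_to_rows_through[OF i] by (auto simp: D_def)
  ultimately show ?thesis
    using that by (auto simp: D_def)
qed

lemma exists_isolating_vector_row:
  assumes j: "j < m" and c: "c \<in> S j"
  obtains v where "v $ h c = 0" and "v \<bullet> row j \<noteq> 0"
    and "\<And>j'. j' < m \<Longrightarrow> j' \<noteq> j \<Longrightarrow> c \<in> S j' \<Longrightarrow> v \<bullet> row j' = 0"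
proof -
  have c_less: "c < CARD('n)"
    using admissible_pattern_support[OF admissible j] c by auto
  define D where "D = {j'. j' < m \<and> c \<in> S j' \<and> j' \<noteq> j}"
  have D: "insert j D = {j'. j' < m \<and> c \<in> S j'}" "j \<notin> D" "finite D"
    using j c by (auto simp: D_def)
  then have "Suc (card D) = card {j'. j' < m \<and> c \<in> S j'}"
    using card_insert_disjoint[OF D(3,2)] by simp
  then have "Suc (card D) \<le> CARD('n) - 1"
    using admissible_pattern_degree[OF admissible c_less] by simp
  moreover have "card (insert (axis (h c) 1) (row ` D)) \<le> Suc (card D)"
    using D(3) card_image_le[of D row] by (simp add: card_insert_if)
  ultimately have "card (insert (axis (h c) 1) (row ` D)) < CARD('n)"
    by linarith
  then obtain v where "v \<noteq> 0" and "v \<bullet> axis (h c) 1 = 0" and "\<forall>j'\<in>D. v \<bullet> row j' = 0"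
    using exists_orthogonal_nonzero[of "insert (axis (h c) 1) (row ` D)"] by (auto simp: D_def)
  moreover from this have "v $ h c = 0"
    by (simp add: inner_axis)
  moreover from calculation have "v \<bullet> row j \<noteq> 0"
    using eq_0_if_orthogonal_to_rows_through[OF c_less] by (auto simp: D_def)
  ultimately show ?thesis
    using that by (auto simp: D_def)
qed

lemma isolating_pair_axis:
  assumes i: "i < CARD('n)"
  shows "\<exists>u v. (u \<bullet> frame_vec i) * (v \<bullet> frame_vec i) \<noteq> 0 \<and>
    (\<forall>i'<CARD('n) + m. i' \<noteq> i \<longrightarrow> (u \<bullet> frame_vec i') * (v \<bullet> frame_vec i') = 0)"
proof -
  obtain u where u: "u $ h i \<noteq> 0" "\<And>j. j < m \<Longrightarrow> i \<in> S j \<Longrightarrow> u \<bullet> row j = 0"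
    using exists_isolating_vector_axis[OF i] by blast
  define v :: "real^'n" where "v = axis (h i) 1"
  have "(u \<bullet> frame_vec i') * (v \<bullet> frame_vec i') = 0" if "i' < CARD('n) + m" "i' \<noteq> i" for i'
    using that(1)
  proof (cases rule: frame_index_cases)
    case axis
    then show ?thesis using i that(2) by (simp add: v_def inner_axis_frame_vec)
  next
    case (row j)
    then show ?thesis
      using u(2)[of j] i
      by (cases "i \<in> S j") (auto simp: v_def inner_frame_vec_row inner_axis_row pow2_entry_def)
  qed
  moreover have "(u \<bullet> frame_vec i) * (v \<bullet> frame_vec i) \<noteq> 0"
    using i u(1) by (simp add: v_def inner_axis_frame_vec inner_frame_vec_axis)
  ultimately show ?thesis by blast
qed

lemma isolating_pair_row:
  assumes j: "j < m"
  shows "\<exists>u v. (u \<bullet> frame_vec (CARD('n) + j)) * (v \<bullet> frame_vec (CARD('n) + j)) \<noteq> 0 \<and>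
    (\<forall>i'<CARD('n) + m. i' \<noteq> CARD('n) + j \<longrightarrow> (u \<bullet> frame_vec i') * (v \<bullet> frame_vec i') = 0)"
proof -
  obtain c where c: "c \<in> S j" "c < CARD('n)"
    using admissible_pattern_support[OF admissible j] by auto
  obtain v where v: "v $ h c = 0" "v \<bullet> row j \<noteq> 0"
    "\<And>j'. j' < m \<Longrightarrow> j' \<noteq> j \<Longrightarrow> c \<in> S j' \<Longrightarrow> v \<bullet> row j' = 0"
    using exists_isolating_vector_row[OF j c(1)] by blast
  define u :: "real^'n" where "u = axis (h c) 1"
  have "(u \<bullet> frame_vec i') * (v \<bullet> frame_vec i') = 0"
    if "i' < CARD('n) + m" "i' \<noteq> CARD('n) + j" for i'
    using that(1)
  proof (cases rule: frame_index_cases)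
    case axis
    show ?thesis
    proof (cases "i' = c")
      case True
      then show ?thesis using v(1) c(2) by (simp add: inner_frame_vec_axis)
    next
      case False
      then show ?thesis using c(2) axis by (simp add: u_def inner_axis_frame_vec)
    qed
  next
    case (row j')
    then show ?thesis
      using v(3)[of j'] that(2) c(2)
      by (cases "c \<in> S j'") (auto simp: u_def inner_frame_vec_row inner_axis_row pow2_entry_def)
  qed
  moreover have "(u \<bullet> frame_vec (CARD('n) + j)) * (v \<bullet> frame_vec (CARD('n) + j)) \<noteq> 0"
    using c v(2) by (simp add: u_def inner_frame_vec_row inner_axis_row pow2_entry_def)
  ultimately show ?thesis by blast
qed

lemma isolating_pair:
  assumes "i < CARD('n) + m"
  shows "\<exists>u v. (u \<bullet> frame_vec i) * (v \<bullet> frame_vec i) \<noteq> 0 \<and>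
    (\<forall>i'<CARD('n) + m. i' \<noteq> i \<longrightarrow> (u \<bullet> frame_vec i') * (v \<bullet> frame_vec i') = 0)"
  using assms
proof (cases rule: frame_index_cases)
  case axis
  then show ?thesis by (rule isolating_pair_axis)
next
  case (row j)
  then show ?thesis using isolating_pair_row by blast
qed

end

theorem theorem2p1:
  fixes N :: nat
  assumes "2 * CARD('n::finite) - 1 \<le> N"
      and "N \<le> CARD('n) * (CARD('n) + 1) div 2"
  shows "\<exists>f :: nat \<Rightarrow> real^'n. exact_PR_frame N f"
proof -
  obtain m S where N: "CARD('n) + m = N" and "admissible_pattern CARD('n) m S"
    using admissible_pattern_exists[OF _ assms] by (auto simp: Suc_le_eq)
  moreover obtain h :: "nat \<Rightarrow> 'n" where "bij_betw h {..<CARD('n)} UNIV"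
    using ex_bij_betw_nat_finite[of "UNIV :: 'n set"] by (auto simp: atLeast0LessThan)
  ultimately interpret pattern_frame h m S
    by unfold_locales
  have "frame_vec ` {..<CARD('n)} \<subseteq> frame_vec ` {0..<N}"
    using N by (intro image_mono) auto
  then have "is_frame N frame_vec"
    using axis_in_frame_vecs by (intro is_frame_if_axes) blast
  moreover have "phase_retrievable N frame_vec"
    using complement_property N by (intro phase_retrievableI) auto
  moreover have "exact_PR_redundancy N frame_vec"
    using isolating_pair N by (intro exact_PR_redundancyI) auto
  ultimately show ?thesis
    unfolding exact_PR_frame_def PR_frame_def by blast
qed

end
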